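(* Consider a problem with $m=2$ worker nodes and a DPM algorithm as described in the context. If the odd-even preserving property holds, then the output solution $x^t$ generated by the DPM algorithm after $t$ communication rounds satisfies $x^t\in K_{\lceil t/2\rceil+2}$.
   Context: Problem data: $X\subseteq\mathbb{R}^n$, $u$, and for worker $i$ a matrix $A_i$, set $\Pi_i$ and function $f_i^*$ (with $f_i(x)=\max_{\pi_i\in\Pi_i}\langle A_ix,\pi_i\rangle-f_i^*(\pi_i)$). A DPM (distributed prox mapping) algorithm maintains a server memory $\mathcal M_s^t$, and for each worker $i$ a primal memory $\mathcal M_i^t$ and a dual memory $\mathcal M_i^{\pi,t}$, all equal to $\{0\}$ at $t=0$. In round $t\ge1$: $\mathcal M_s^t=\mathcal M_s^{t,cp}\cup\mathcal M_s^{t,cm}$, $\mathcal M_i^t=\mathcal M_i^{t,cp}\cup\mathcal M_i^{t,cm}$, $\mathcal M_i^{\pi,t}=\mathcal M_i^{\pi,t,cp}$, where: (communication) $\mathcal M_s^{t,cm}=\{y_i:i\in[m]\}$ with $y_i\in\mathrm{span}(\mathcal M_i^{t-1})$, and $\mathcal M_i^{t,cm}$ consists of one vector in $\mathrm{span}(\mathcal M_s^{t-1})$; (worker computation) starting from $\mathcal M_i^{t,0}=\mathcal M_i^{t-1}$, $\mathcal M_i^{\pi,t,0}=\mathcal M_i^{\pi,t-1}$, for $l=1,\dots,L$ ($L\ge0$ arbitrary) pick $\bar x\in\mathrm{span}(\mathcal M_i^{t,l-1})$, $\bar\pi_i\in\mathrm{span}(\mathcal M_i^{\pi,t,l-1})$,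 $\tau\ge0$, and $\pi_i^{t,l}\in\arg\max_{\pi_i\in\Pi_i}\langle A_i\bar x,\pi_i\rangle-f_i^*(\pi_i)-\frac\tau2\|\pi_i-\bar\pi_i\|^2$, and set $\mathcal M_i^{t,l}=\mathcal M_i^{t,l-1}\cup\{A_i^\top\pi_i^{t,l},A_i^\top\bar\pi_i\}$, $\mathcal M_i^{\pi,t,l}=\mathcal M_i^{\pi,t,l-1}\cup\{\pi_i^{t,l},A_i\bar x\}$; then $\mathcal M_i^{t,cp}=\mathcal M_i^{t,L}$, $\mathcal M_i^{\pi,t,cp}=\mathcal M_i^{\pi,t,L}$; (server computation) starting from $\mathcal M_s^{t,0}=\mathcal M_s^{t-1}$, for $l=1,\dots,L$ pick $\bar x\in\mathrm{span}(\mathcal M_s^{t,l-1})$, $\eta>0$, and add $x_s^l=\arg\min_{x\in X}u(x)+\frac\eta2\|x-\bar x\|^2$; $\mathcal M_s^{t,cp}=\mathcal M_s^{t,L}$. The output after $t$ rounds is some $x^t\in\mathrm{span}(\bigcup_i\mathcal M_i^t\cup\mathcal M_s^t)$. Let $K_j=\{x\in\mathbb{R}^n:x_l=0\ \forall l>j\}$. With two workers, the problem is odd-even preserving if for any DPM algorithm: $\mathcal M_1^0\cup\mathcal M_2^0\cup\mathcal M_s^0\subset K_2$; for every $i\ge2$ and $t\ge1$: if $\mathcal M_1^{t-1}\subset K_i$ then $\mathcal M_1^{t,cp}\subset K_i$ when $i$ is even and $\mathcal M_1^{t,cp}\subset K_{i+1}$ when $i$ is odd; if $\mathcal M_2^{t-1}\subset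 K_i$ then $\mathcal M_2^{t,cp}\subset K_{i+1}$ when $i$ is even and $\mathcal M_2^{t,cp}\subset K_i$ when $i$ is odd; and if $\mathcal M_s^{t-1}\subset K_i$ then $\mathcal M_s^{t,cp}\subset K_i$. *)

theory Defs
  imports Complex_Main "HOL-Library.Function_Algebras"
begin

text \<open>Vectors of R^d are represented as functions nat => real whose
coordinates are indexed 1..d (all other coordinates are 0).\<close>

type_synonym vec = "nat \<Rightarrow> real"

definition vecs :: "nat \<Rightarrow> vec set" where
  "vecs d = {x. \<forall>l. (l = 0 \<or> d < l) \<longrightarrow> x l = 0}"

definition scl :: "real \<Rightarrow> vec \<Rightarrow> vec" where
  "scl c x = (\<lambda>l. c * x l)"

lemma module_scl: "module scl"
  by unfold_locales (auto simp: scl_def algebra_simps fun_eq_iff)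

abbreviation lspan :: "vec set \<Rightarrow> vec set" where
  "lspan S \<equiv> module.span scl S"

definition K :: "nat \<Rightarrow> vec set" where
  "K j = {x. \<forall>l. j < l \<longrightarrow> x l = 0}"

definition ip :: "nat \<Rightarrow> vec \<Rightarrow> vec \<Rightarrow> real" where
  "ip d x y = (\<Sum>l=1..d. x l * y l)"

definition sqnorm :: "nat \<Rightarrow> vec \<Rightarrow> real" where
  "sqnorm d x = ip d x x"

definition mat_vec :: "nat \<Rightarrow> nat \<Rightarrow> (nat \<Rightarrow> nat \<Rightarrow> real) \<Rightarrow> vec \<Rightarrow> vec" where
  "mat_vec p n A x = (\<lambda>k. if 1 \<le> k \<and> k \<le> p then (\<Sum>l=1..n. A k l * x l) else 0)"

definition matT_vec :: "nat \<Rightarrow> nat \<Rightarrow> (nat \<Rightarrow> nat \<Rightarrow> real) \<Rightarrow> vec \<Rightarrow> vec" where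
  "matT_vec p n A q = (\<lambda>l. if 1 \<le> l \<and> l \<le> n then (\<Sum>k=1..p. A k l * q k) else 0)"

text \<open>Problem data: dimension n, X, u, and for worker i: dual dimension pdim i,
matrix A i (pdim i x n), set Pi i, function fstar i.\<close>
record problem =
  pr_n :: nat
  pr_X :: "vec set"
  pr_u :: "vec \<Rightarrow> real"
  pr_p :: "nat \<Rightarrow> nat"
  pr_A :: "nat \<Rightarrow> nat \<Rightarrow> nat \<Rightarrow> real"
  pr_Pi :: "nat \<Rightarrow> vec set"
  pr_fstar :: "nat \<Rightarrow> vec \<Rightarrow> real"

definition well_formed :: "problem \<Rightarrow> bool" where
  "well_formed P \<longleftrightarrow> pr_X P \<subseteq> vecs (pr_n P) \<and>
     (\<forall>i\<in>{1,2::nat}. pr_Pi P i \<subseteq> vecs (pr_p P i))"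

definition worker_step :: "problem \<Rightarrow> nat \<Rightarrow> vec set \<times> vec set \<Rightarrow> vec set \<times> vec set \<Rightarrow> bool" where
  "worker_step P i S S' \<longleftrightarrow>
     (let n = pr_n P; p = pr_p P i; A = pr_A P i; M = fst S; Mp = snd S in
      \<exists>xb pib \<tau> pinew.
        xb \<in> lspan M \<and> pib \<in> lspan Mp \<and> \<tau> \<ge> 0 \<and>
        pinew \<in> pr_Pi P i \<and>
        (\<forall>q\<in>pr_Pi P i.
            ip p (mat_vec p n A xb) q - pr_fstar P i q - \<tau> / 2 * sqnorm p (q - pib)
          \<le> ip p (mat_vec p n A xb) pinew - pr_fstar P i pinew - \<tau> / 2 * sqnorm p (pinew - pib)) \<and>
        S' = (M \<union> {matT_vec p n A pinew, matT_vec p n A pib},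
              Mp \<union> {pinew, mat_vec p n A xb}))"

definition server_step :: "problem \<Rightarrow> vec set \<Rightarrow> vec set \<Rightarrow> bool" where
  "server_step P M M' \<longleftrightarrow>
     (let n = pr_n P in
      \<exists>xb \<eta> xs.
        xb \<in> lspan M \<and> \<eta> > 0 \<and> xs \<in> pr_X P \<and>
        (\<forall>x\<in>pr_X P. pr_u P xs + \<eta> / 2 * sqnorm n (xs - xb) \<le> pr_u P x + \<eta> / 2 * sqnorm n (x - xb)) \<and>
        M' = M \<union> {xs})"

text \<open>A run of a DPM algorithm (all rounds). Worker memories are indexed
by worker i and round t.\<close>
record dpm_run =
  Ms :: "nat \<Rightarrow> vec set"
  Ms_cp :: "nat \<Rightarrow> vec set"
  Ms_cm :: "nat \<Rightarrow> vec set"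
  Mw :: "nat \<Rightarrow> nat \<Rightarrow> vec set"
  Mw_cp :: "nat \<Rightarrow> nat \<Rightarrow> vec set"
  Mw_cm :: "nat \<Rightarrow> nat \<Rightarrow> vec set"
  Mpi :: "nat \<Rightarrow> nat \<Rightarrow> vec set"
  Mpi_cp :: "nat \<Rightarrow> nat \<Rightarrow> vec set"

text \<open>R is a run of a DPM algorithm with two workers (1 and 2).  The number L
of inner computation steps is arbitrary (hence reflexive-transitive closure).\<close>
definition is_DPM :: "problem \<Rightarrow> dpm_run \<Rightarrow> bool" where
  "is_DPM P R \<longleftrightarrow>
     Ms R 0 = {0} \<and>
     (\<forall>i\<in>{1,2::nat}. Mw R i 0 = {0} \<and> Mpi R i 0 = {0}) \<and>
     (\<forall>t\<ge>1.
        Ms R t = Ms_cp R t \<union> Ms_cm R t \<and>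
        (\<exists>y. (\<forall>i\<in>{1,2::nat}. y i \<in> lspan (Mw R i (t - 1))) \<and> Ms_cm R t = {y 1, y 2}) \<and>
        (server_step P)\<^sup>*\<^sup>* (Ms R (t - 1)) (Ms_cp R t) \<and>
        (\<forall>i\<in>{1,2::nat}.
           Mw R i t = Mw_cp R i t \<union> Mw_cm R i t \<and>
           Mpi R i t = Mpi_cp R i t \<and>
           (\<exists>v\<in>lspan (Ms R (t - 1)). Mw_cm R i t = {v}) \<and>
           (worker_step P i)\<^sup>*\<^sup>* (Mw R i (t - 1), Mpi R i (t - 1)) (Mw_cp R i t, Mpi_cp R i t)))"

definition odd_even_preserving :: "problem \<Rightarrow> bool" where
  "odd_even_preserving P \<longleftrightarrow>
     (\<forall>R. is_DPM P R \<longrightarrow>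
        Mw R 1 0 \<union> Mw R 2 0 \<union> Ms R 0 \<subseteq> K 2 \<and>
        (\<forall>i\<ge>2. \<forall>t\<ge>1.
           (Mw R 1 (t - 1) \<subseteq> K i \<longrightarrow> Mw_cp R 1 t \<subseteq> K (if even i then i else i + 1)) \<and>
           (Mw R 2 (t - 1) \<subseteq> K i \<longrightarrow> Mw_cp R 2 t \<subseteq> K (if even i then i + 1 else i)) \<and>
           (Ms R (t - 1) \<subseteq> K i \<longrightarrow> Ms_cp R t \<subseteq> K i)))"

end

theory Submission
  imports Defs
begin

text \<open>Local computation never takes the server memory out of the subspace \<open>K j\<close> it lies in,
  and of the two workers only one, determined by the parity of \<open>j\<close>, may move on to
  \<open>K (j + 1)\<close>; communication only forwards vectors present one round earlier.  So if all
  memories lie in \<open>K j\<close> at time \<open>t\<close>, then at time \<open>t + 1\<close> the server and the other worker are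
  still in \<open>K j\<close>, and at time \<open>t + 2\<close> everything lies in \<open>K (j + 1)\<close>: the worker that moved
  is now the one kept in place by the parity of \<open>j + 1\<close>, while the other one has only received
  vectors from \<open>K j\<close>.  The index therefore grows by one every two rounds.\<close>

lemma subspace_K: "module.subspace scl (K j)"
  using module_scl by (simp add: module.subspace_def K_def scl_def)

lemma lspan_subset_K: "S \<subseteq> K j \<Longrightarrow> lspan S \<subseteq> K j"
  using module.span_minimal[OF module_scl] subspace_K by blast

lemma K_mono: "a \<le> b \<Longrightarrow> K a \<subseteq> K b"
  by (auto simp: K_def)

definition memories :: "dpm_run \<Rightarrow> nat \<Rightarrow> vec set" where
  "memories R t = Mw R 1 t \<union> Mw R 2 t \<union> Ms R t"

definition slow_worker :: "nat \<Rightarrow> nat" where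
  "slow_worker j = (if even j then 1 else 2)"

lemma is_DPM_round:
  assumes "is_DPM P R"
  shows is_DPM_server_round: "Ms R (Suc t) \<subseteq> Ms_cp R (Suc t) \<union> lspan (Mw R 1 t \<union> Mw R 2 t)"
    and is_DPM_worker_round:
      "i \<in> {1, 2} \<Longrightarrow> Mw R i (Suc t) \<subseteq> Mw_cp R i (Suc t) \<union> lspan (Ms R t)"
proof -
  have round: "Ms R (Suc t) = Ms_cp R (Suc t) \<union> Ms_cm R (Suc t)"
    "\<exists>y. (\<forall>i\<in>{1,2::nat}. y i \<in> lspan (Mw R i t)) \<and> Ms_cm R (Suc t) = {y 1, y 2}"
    "\<forall>i\<in>{1,2::nat}. Mw R i (Suc t) = Mw_cp R i (Suc t) \<union> Mw_cm R i (Suc t) \<and>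
       (\<exists>v\<in>lspan (Ms R t). Mw_cm R i (Suc t) = {v})"
    using conjunct2[OF conjunct2[OF assms[unfolded is_DPM_def]], rule_format, of "Suc t"]
    by simp_all
  obtain y :: "nat \<Rightarrow> vec" where y: "y 1 \<in> lspan (Mw R 1 t)" "y 2 \<in> lspan (Mw R 2 t)"
    and cm: "Ms_cm R (Suc t) = {y 1, y 2}"
    using round(2) by auto
  have "y 1 \<in> lspan (Mw R 1 t \<union> Mw R 2 t)" "y 2 \<in> lspan (Mw R 1 t \<union> Mw R 2 t)"
    using y module.span_mono[OF module_scl, of "Mw R _ t" "Mw R 1 t \<union> Mw R 2 t"] by auto
  then show "Ms R (Suc t) \<subseteq> Ms_cp R (Suc t) \<union> lspan (Mw R 1 t \<union> Mw R 2 t)"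
    unfolding round(1) cm by blast
  show "Mw R i (Suc t) \<subseteq> Mw_cp R i (Suc t) \<union> lspan (Ms R t)" if "i \<in> {1, 2}"
    using round(3) that by fastforce
qed

lemma odd_even_preserving_initial:
  assumes "odd_even_preserving P" and "is_DPM P R"
  shows "memories R 0 \<subseteq> K 2"
  using assms by (simp add: odd_even_preserving_def memories_def)

lemma odd_even_preserving_round:
  assumes oep: "odd_even_preserving P" and dpm: "is_DPM P R" and "2 \<le> j"
  shows odd_even_preserving_server: "Ms R t \<subseteq> K j \<Longrightarrow> Ms_cp R (Suc t) \<subseteq> K j"
    and odd_even_preserving_worker: "i \<in> {1, 2} \<Longrightarrow> Mw R i t \<subseteq> K j \<Longrightarrow>
      Mw_cp R i (Suc t) \<subseteq> K (if i = slow_worker j then j else Suc j)"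
proof -
  have "(Mw R 1 t \<subseteq> K j \<longrightarrow> Mw_cp R 1 (Suc t) \<subseteq> K (if even j then j else j + 1)) \<and>
        (Mw R 2 t \<subseteq> K j \<longrightarrow> Mw_cp R 2 (Suc t) \<subseteq> K (if even j then j + 1 else j)) \<and>
        (Ms R t \<subseteq> K j \<longrightarrow> Ms_cp R (Suc t) \<subseteq> K j)"
    using oep dpm \<open>2 \<le> j\<close> unfolding odd_even_preserving_def
    by (auto dest!: spec[of _ j] spec[of _ "Suc t"])
  then show "Ms R t \<subseteq> K j \<Longrightarrow> Ms_cp R (Suc t) \<subseteq> K j"
    and "i \<in> {1, 2} \<Longrightarrow> Mw R i t \<subseteq> K j \<Longrightarrow>
      Mw_cp R i (Suc t) \<subseteq> K (if i = slow_worker j then j else Suc j)"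
    by (auto simp: slow_worker_def)
qed

lemma memories_K_one_round:
  assumes oep: "odd_even_preserving P" and dpm: "is_DPM P R" and "2 \<le> j"
    and mem: "memories R t \<subseteq> K j"
  shows "Ms R (Suc t) \<subseteq> K j" and "Mw R (slow_worker j) (Suc t) \<subseteq> K j"
    and "memories R (Suc t) \<subseteq> K (Suc j)"
proof -
  have K_Suc: "K j \<subseteq> K (Suc j)"
    by (simp add: K_mono)
  have workers: "i \<in> {1, 2} \<Longrightarrow> Mw R i t \<subseteq> K j" and server: "Ms R t \<subseteq> K j" for i
    using mem by (auto simp: memories_def)
  have "Mw R 1 t \<union> Mw R 2 t \<subseteq> K j"
    using workers by blast
  then show server': "Ms R (Suc t) \<subseteq> K j"
    using is_DPM_server_round[OF dpm] odd_even_preserving_server[OF oep dpm \<open>2 \<le> j\<close> server]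
      lspan_subset_K by blast
  have worker': "Mw R i (Suc t) \<subseteq> K (if i = slow_worker j then j else Suc j)"
    if i: "i \<in> {1, 2}" for i
  proof -
    have "Mw R i (Suc t) \<subseteq> Mw_cp R i (Suc t) \<union> lspan (Ms R t)"
      using is_DPM_worker_round[OF dpm i] .
    moreover have "Mw_cp R i (Suc t) \<subseteq> K (if i = slow_worker j then j else Suc j)"
      using odd_even_preserving_worker[OF oep dpm \<open>2 \<le> j\<close> i workers[OF i]] .
    ultimately show ?thesis
      using lspan_subset_K[OF server] K_Suc by (auto split: if_splits)
  qed
  show "Mw R (slow_worker j) (Suc t) \<subseteq> K j"
    using worker'[of "slow_worker j"] by (simp add: slow_worker_def)
  show "memories R (Suc t) \<subseteq> K (Suc j)"
    using worker'[of 1] worker'[of 2] server' K_Suc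
    by (auto simp: memories_def split: if_splits)
qed

lemma memories_K_two_rounds:
  assumes oep: "odd_even_preserving P" and dpm: "is_DPM P R" and "2 \<le> j"
    and mem: "memories R t \<subseteq> K j"
  shows "memories R (Suc (Suc t)) \<subseteq> K (Suc j)"
proof -
  note first = memories_K_one_round[OF oep dpm \<open>2 \<le> j\<close> mem]
  have "2 \<le> Suc j" and K_Suc: "K j \<subseteq> K (Suc j)"
    using \<open>2 \<le> j\<close> by (simp_all add: K_mono)
  have workers: "i \<in> {1, 2} \<Longrightarrow> Mw R i (Suc t) \<subseteq> K (Suc j)" for i
    using first(3) by (auto simp: memories_def)
  have slow: "slow_worker j \<in> {1, 2}" and fast: "slow_worker (Suc j) \<in> {1, 2}"
    by (simp_all add: slow_worker_def)
  have "Mw_cp R (slow_worker j) (Suc (Suc t)) \<subseteq> K j"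
    using odd_even_preserving_worker[OF oep dpm \<open>2 \<le> j\<close> slow first(2)] by simp
  then have slow_cp: "Mw_cp R (slow_worker j) (Suc (Suc t)) \<subseteq> K (Suc j)"
    using K_Suc by blast
  have fast_cp: "Mw_cp R (slow_worker (Suc j)) (Suc (Suc t)) \<subseteq> K (Suc j)"
    using odd_even_preserving_worker[OF oep dpm \<open>2 \<le> Suc j\<close> fast workers[OF fast]] by simp
  have cp: "Mw_cp R i (Suc (Suc t)) \<subseteq> K (Suc j)" if "i \<in> {1, 2}" for i
    using that slow_cp fast_cp by (auto simp: slow_worker_def split: if_splits)
  have "Mw R i (Suc (Suc t)) \<subseteq> K (Suc j)" if i: "i \<in> {1, 2}" for i
    using is_DPM_worker_round[OF dpm i] cp[OF i] lspan_subset_K[OF first(1)] K_Suc by blast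
  moreover have "Ms R (Suc (Suc t)) \<subseteq> K (Suc j)"
  proof -
    have "Ms_cp R (Suc (Suc t)) \<subseteq> K (Suc j)"
      using odd_even_preserving_server[OF oep dpm \<open>2 \<le> Suc j\<close>] first(1) K_Suc by blast
    moreover have "lspan (Mw R 1 (Suc t) \<union> Mw R 2 (Suc t)) \<subseteq> K (Suc j)"
      using workers by (intro lspan_subset_K) blast
    ultimately show ?thesis
      using is_DPM_server_round[OF dpm] by blast
  qed
  ultimately show ?thesis
    by (auto simp: memories_def)
qed

lemma memories_K_even:
  assumes "odd_even_preserving P" and "is_DPM P R"
  shows "memories R (2 * k) \<subseteq> K (k + 2)"
proof (induction k)
  case 0
  show ?case using odd_even_preserving_initial[OF assms] by (simp add: numeral_2_eq_2)
next
  case (Suc k)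
  show ?case
    using memories_K_two_rounds[OF assms _ Suc.IH] by simp
qed

lemma memories_K:
  assumes "odd_even_preserving P" and "is_DPM P R"
  shows "memories R t \<subseteq> K (t div 2 + t mod 2 + 2)"
proof (cases "even t")
  case True
  then show ?thesis
    using memories_K_even[OF assms, of "t div 2"] by simp
next
  case False
  then obtain k where t: "t = 2 * k + 1"
    using oddE by blast
  have "memories R (Suc (2 * k)) \<subseteq> K (Suc (k + 2))"
    using memories_K_one_round(3)[OF assms _ memories_K_even[OF assms]] by simp
  then show ?thesis
    using t by simp
qed

lemma nat_ceiling_half: "nat \<lceil>real t / 2\<rceil> = t div 2 + t mod 2"
proof (cases "even t")
  case True
  then show ?thesis by auto
next
  case False
  then obtain k where t: "t = 2 * k + 1"
    using oddE by blast
  have "\<lceil>real t / 2\<rceil> = int k + 1"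
    unfolding t by (simp add: ceiling_eq_iff)
  then show ?thesis
    using t by simp
qed

theorem lemma5p1:
  fixes P :: problem and R :: dpm_run and t :: nat and x :: vec
  assumes "well_formed P"
    and "odd_even_preserving P"
    and "is_DPM P R"
    and "x \<in> lspan (Mw R 1 t \<union> Mw R 2 t \<union> Ms R t)"
  shows "x \<in> K (nat \<lceil>real t / 2\<rceil> + 2)"
proof -
  have "Mw R 1 t \<union> Mw R 2 t \<union> Ms R t \<subseteq> K (nat \<lceil>real t / 2\<rceil> + 2)"
    using memories_K[OF assms(2,3)] by (simp add: memories_def nat_ceiling_half)
  then show ?thesis
    using lspan_subset_K assms(4) by blast
qed

end
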